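(* Let $\phi:\Delta\to\mathbb R$ be continuous, and for each $n$ and each pair of partitions $\lambda,\mu\vdash n$ let $\phi^{(\lambda)}_n(\mu)\in\mathbb R$ be given, such that there is a sequence $\delta_n\to0$ (not depending on $\lambda,\mu$) with $|\phi^{(\lambda)}_n(\mu)-\phi(\mu/n)|\le\delta_n$ for all $n,\lambda,\mu$. Let $g(x)=\max_{y\in\Delta,\,y\trianglerighteq x}\phi(y)$. Then for any $y\in\mathbb R^\theta$, as $n\to\infty$, \[ \frac1n\log\Big(\sum_{\lambda\vdash n}e^{y\cdot\lambda}\sum_{\mu\vdash n,\ \mu\trianglerighteq\lambda}\exp\big(n\,\phi^{(\lambda)}_n(\mu)\big)\Big)\to\max_{x\in\Delta}\big(y\cdot x+g(x)\big). \]
   Context: Fix $\theta\in\{2,3,\dots\}$. A partition $\lambda\vdash n$ means a vector $(\lambda_1,\dots,\lambda_\theta)$ of nonnegative integers with $\lambda_1\ge\dots\ge\lambda_\theta$ and $\sum\lambda_i=n$. $\Delta=\{x\in[0,1]^\theta:x_1\ge\dots\ge x_\theta,\ \sum_i x_i=1\}$. For vectors $x,y$, $y\trianglerighteq x$ means $y_1+\dots+y_i\ge x_1+\dots+x_i$ for all $i$. $y\cdot x=\sum_i y_ix_i$. *)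

theory Defs
  imports "HOL-Analysis.Analysis"
begin

text \<open>Vectors in R^theta are functions nat => real, indices 0..theta-1; all
 objects are taken to vanish outside the index range (extensional).\<close>

definition partitions :: "nat \<Rightarrow> nat \<Rightarrow> (nat \<Rightarrow> nat) set" where
  "partitions \<theta> n = {l. (\<forall>i\<ge>\<theta>. l i = 0) \<and> (\<forall>i j. i \<le> j \<longrightarrow> j < \<theta> \<longrightarrow> l j \<le> l i)
                        \<and> (\<Sum>i<\<theta>. l i) = n}"

definition simplexD :: "nat \<Rightarrow> (nat \<Rightarrow> real) set" where
  "simplexD \<theta> = {x. (\<forall>i\<ge>\<theta>. x i = 0) \<and> (\<forall>i<\<theta>. 0 \<le> x i \<and> x i \<le> 1)
                  \<and> (\<forall>i j. i \<le> j \<longrightarrow> j < \<theta> \<longrightarrow> x j \<le> x i) \<and> (\<Sum>i<\<theta>. x i) = 1}"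

text \<open>dominates theta y x  means  y \<unrhd> x: all partial sums of y dominate those of x.\<close>
definition dominates :: "nat \<Rightarrow> (nat \<Rightarrow> real) \<Rightarrow> (nat \<Rightarrow> real) \<Rightarrow> bool" where
  "dominates \<theta> y x \<longleftrightarrow> (\<forall>k\<le>\<theta>. (\<Sum>j<k. x j) \<le> (\<Sum>j<k. y j))"

definition dotp :: "nat \<Rightarrow> (nat \<Rightarrow> real) \<Rightarrow> (nat \<Rightarrow> real) \<Rightarrow> real" where
  "dotp \<theta> y x = (\<Sum>i<\<theta>. y i * x i)"

definition realv :: "(nat \<Rightarrow> nat) \<Rightarrow> (nat \<Rightarrow> real)" where
  "realv l = (\<lambda>i. real (l i))"

definition gfun :: "nat \<Rightarrow> ((nat \<Rightarrow> real) \<Rightarrow> real) \<Rightarrow> (nat \<Rightarrow> real) \<Rightarrow> real" where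
  "gfun \<theta> \<phi> x = (SUP y\<in>{y\<in>simplexD \<theta>. dominates \<theta> y x}. \<phi> y)"

end

theory Submission
  imports Defs "HOL-Real_Asymp.Real_Asymp"
begin

text \<open>The double sum has at most \<open>(n + 1)^(2\<theta>)\<close> terms \<open>exp (n (y\<cdot>\<lambda>/n + \<Phi>))\<close>, so by the
  Laplace principle its normalised logarithm is the largest exponent up to \<open>o(1)\<close>. As \<open>\<mu>/n\<close>
  dominates \<open>\<lambda>/n\<close>, every exponent is at most \<open>max (y\<cdot>x + g x) + \<delta> n\<close>. Conversely, a
  near-maximiser \<open>x\<close> and a near-optimal \<open>z\<close> dominating it are approximated by partitions
  \<open>\<lambda>\<^sub>n\<close>, \<open>\<mu>\<^sub>n\<close> with \<open>\<mu>\<^sub>n\<close> dominating \<open>\<lambda>\<^sub>n\<close>, and continuity of \<open>\<phi>\<close> gives the matching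
  lower bound.\<close>

lemma tendsto_fun_componentwise:
  fixes f :: "'b \<Rightarrow> nat \<Rightarrow> real"
  assumes "\<And>i. ((\<lambda>n. f n i) \<longlongrightarrow> l i) F"
  shows "(f \<longlongrightarrow> l) F"
proof -
  have "limitin (product_topology (\<lambda>i. euclidean) UNIV) f l F"
    using assms by (subst limitin_componentwise) auto
  then show ?thesis by (simp add: euclidean_product_topology)
qed

lemma tendsto_ln_sum_exp_over_n:
  fixes a :: "nat \<Rightarrow> 'i \<Rightarrow> real" and I :: "nat \<Rightarrow> 'i set"
  assumes finite: "\<And>n. finite (I n)"
    and card: "\<And>n. card (I n) \<le> (n + 1) ^ k"
    and eps: "\<epsilon> \<longlonglongrightarrow> 0"
    and upper: "\<And>n i. n \<ge> 1 \<Longrightarrow> i \<in> I n \<Longrightarrow> a n i \<le> M + \<epsilon> n"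
    and lower: "\<And>c. c < M \<Longrightarrow> \<forall>\<^sub>F n in sequentially. \<exists>i\<in>I n. c < a n i"
  shows "(\<lambda>n. ln (\<Sum>i\<in>I n. exp (real n * a n i)) / real n) \<longlonglongrightarrow> M"
proof (rule order_tendstoI)
  fix c assume "c < M"
  show "\<forall>\<^sub>F n in sequentially. c < ln (\<Sum>i\<in>I n. exp (real n * a n i)) / real n"
    using lower[OF \<open>c < M\<close>] eventually_ge_at_top[of 1]
  proof eventually_elim
    case (elim n)
    then obtain i where i: "i \<in> I n" "c < a n i" by blast
    have "exp (real n * c) < exp (real n * a n i)"
      using i elim by simp
    also have "\<dots> \<le> (\<Sum>i\<in>I n. exp (real n * a n i))"
      using i finite by (intro member_le_sum) auto
    finally have "real n * c < ln (\<Sum>i\<in>I n. exp (real n * a n i))"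
      by (metis exp_gt_zero ln_exp ln_less_cancel_iff order.strict_trans)
    then show ?case
      using elim by (simp add: pos_less_divide_eq mult.commute)
  qed
next
  fix c assume "M < c"
  define H where "H n = M + \<epsilon> n + real k * ln (real n + 1) / real n" for n
  have "(\<lambda>n. real k * ln (real n + 1) / real n) \<longlonglongrightarrow> 0"
    by real_asymp
  then have "H \<longlonglongrightarrow> M + 0 + 0"
    unfolding H_def by (intro tendsto_add tendsto_const eps)
  then have "\<forall>\<^sub>F n in sequentially. H n < c"
    using \<open>M < c\<close> by (intro order_tendstoD(2)) auto
  moreover have "\<forall>\<^sub>F n in sequentially. \<exists>i\<in>I n. M - 1 < a n i"
    by (rule lower) simp
  ultimately show "\<forall>\<^sub>F n in sequentially. ln (\<Sum>i\<in>I n. exp (real n * a n i)) / real n < c"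
    using eventually_ge_at_top[of 1]
  proof eventually_elim
    case (elim n)
    let ?S = "\<Sum>i\<in>I n. exp (real n * a n i)"
    have pos: "0 < ?S"
      using elim finite by (intro sum_pos) auto
    have "?S \<le> real (card (I n)) * exp (real n * (M + \<epsilon> n))"
      using upper elim by (intro sum_bounded_above) (simp add: mult_left_mono)
    also have "\<dots> \<le> (real n + 1) ^ k * exp (real n * (M + \<epsilon> n))"
    proof (rule mult_right_mono)
      show "real (card (I n)) \<le> (real n + 1) ^ k"
        using card[of n] by (metis of_nat_1 of_nat_add of_nat_le_iff of_nat_power)
    qed simp
    finally have "ln ?S \<le> ln ((real n + 1) ^ k * exp (real n * (M + \<epsilon> n)))"
      using pos by simp
    also have "\<dots> = real n * H n"
      using elim by (simp add: H_def ln_mult ln_realpow field_simps)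
    also have "\<dots> < real n * c"
      using elim by simp
    finally show ?case
      using elim by (simp add: divide_less_eq mult.commute)
  qed
qed

lemma simplexD_bounds:
  assumes "x \<in> simplexD \<theta>"
  shows "0 \<le> x i" "x i \<le> 1"
  using assms unfolding simplexD_def by (cases "i < \<theta>"; simp)+

lemma simplexD_sum: "x \<in> simplexD \<theta> \<Longrightarrow> (\<Sum>i<\<theta>. x i) = 1"
  unfolding simplexD_def by simp

lemma compact_simplexD: "compact (simplexD \<theta>)"
proof -
  have "compactin (product_topology (\<lambda>i. euclidean) UNIV) (PiE UNIV (\<lambda>i::nat. {0..1::real}))"
    by (subst compactin_PiE) auto
  then have cube: "compact (PiE UNIV (\<lambda>i::nat. {0..1::real}))"
    by (simp add: euclidean_product_topology)
  have coord: "continuous_on UNIV (\<lambda>x::nat \<Rightarrow> real. x i)" for i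
    by simp
  have "simplexD \<theta> = (\<Inter>i\<in>{\<theta>..}. {x. x i = 0}) \<inter> (\<Inter>i\<in>{..<\<theta>}. {x. 0 \<le> x i} \<inter> {x. x i \<le> 1})
     \<inter> (\<Inter>(i, j)\<in>{(i, j). i \<le> j \<and> j < \<theta>}. {x. x j \<le> x i}) \<inter> {x. (\<Sum>i<\<theta>. x i) = 1}"
    unfolding simplexD_def by blast
  also have "closed \<dots>"
    by (intro closed_Int closed_INT ballI closed_Collect_le closed_Collect_eq coord
        continuous_on_const continuous_on_sum) (auto intro: closed_Collect_le coord)
  finally have "compact (PiE UNIV (\<lambda>i::nat. {0..1::real}) \<inter> simplexD \<theta>)"
    by (rule compact_Int_closed[OF cube])
  moreover have "simplexD \<theta> \<subseteq> PiE UNIV (\<lambda>i::nat. {0..1::real})"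
  proof
    fix x assume "x \<in> simplexD \<theta>"
    then show "x \<in> PiE UNIV (\<lambda>i::nat. {0..1::real})"
      using simplexD_bounds[of x \<theta>] by auto
  qed
  ultimately show ?thesis
    by (simp add: Int_absorb1)
qed

lemma simplexD_convex_comb:
  assumes "p \<in> simplexD \<theta>" "q \<in> simplexD \<theta>" "0 \<le> t" "t \<le> 1"
  shows "(\<lambda>i. (1 - t) * p i + t * q i) \<in> simplexD \<theta>"
proof -
  have "(\<Sum>i<\<theta>. (1 - t) * p i + t * q i) = (1 - t) * (\<Sum>i<\<theta>. p i) + t * (\<Sum>i<\<theta>. q i)"
    by (simp add: sum.distrib sum_distrib_left)
  then have sum: "(\<Sum>i<\<theta>. (1 - t) * p i + t * q i) = 1"
    using assms(1,2) by (simp add: simplexD_sum)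
  have "(1 - t) * p i \<le> 1 - t" "t * q i \<le> t" "0 \<le> (1 - t) * p i" "0 \<le> t * q i" for i
    using assms simplexD_bounds[of p] simplexD_bounds[of q] by (auto simp: mult_left_le)
  then have bounds: "0 \<le> (1 - t) * p i + t * q i \<and> (1 - t) * p i + t * q i \<le> 1" for i
    by (smt (verit))
  have "(1 - t) * p j + t * q j \<le> (1 - t) * p i + t * q i" if "i \<le> j" "j < \<theta>" for i j
    using assms that unfolding simplexD_def by (intro add_mono mult_left_mono) auto
  with sum bounds assms(1,2) show ?thesis
    unfolding simplexD_def by auto
qed

lemma abs_dotp_le:
  assumes "x \<in> simplexD \<theta>"
  shows "\<bar>dotp \<theta> y x\<bar> \<le> (\<Sum>i<\<theta>. \<bar>y i\<bar>)"
proof -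
  have "\<bar>dotp \<theta> y x\<bar> \<le> (\<Sum>i<\<theta>. \<bar>y i * x i\<bar>)"
    unfolding dotp_def by (rule sum_abs)
  also have "\<dots> \<le> (\<Sum>i<\<theta>. \<bar>y i\<bar>)"
    using simplexD_bounds[OF assms] by (intro sum_mono) (simp add: abs_mult mult_left_le)
  finally show ?thesis .
qed

lemma dominates_refl: "dominates \<theta> x x"
  unfolding dominates_def by auto

lemma split_sum_at:
  fixes f :: "nat \<Rightarrow> real"
  assumes "k \<le> \<theta>"
  shows "(\<Sum>j<\<theta>. f j) = (\<Sum>j<k. f j) + (\<Sum>j\<in>{k..<\<theta>}. f j)"
  using sum.atLeastLessThan_concat[of 0 k \<theta> f] assms by (simp add: atLeast0LessThan)

lemma dominates_if_tails_le:
  assumes "(\<Sum>j<\<theta>. u j) = (\<Sum>j<\<theta>. v j)"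
    and "\<And>k. 1 \<le> k \<Longrightarrow> k \<le> \<theta> \<Longrightarrow> (\<Sum>j\<in>{k..<\<theta>}. v j) \<le> (\<Sum>j\<in>{k..<\<theta>}. u j)"
  shows "dominates \<theta> v u"
  unfolding dominates_def
proof (intro allI impI)
  fix k assume k: "k \<le> \<theta>"
  show "(\<Sum>j<k. u j) \<le> (\<Sum>j<k. v j)"
  proof (cases "k = 0")
    case False
    then show ?thesis
      using assms(1) assms(2)[of k] k split_sum_at[OF k, of u] split_sum_at[OF k, of v] by simp
  qed simp
qed

lemma tails_le_if_dominates:
  assumes "dominates \<theta> z x" "(\<Sum>j<\<theta>. x j) = (\<Sum>j<\<theta>. z j)" "k \<le> \<theta>"
  shows "(\<Sum>j\<in>{k..<\<theta>}. z j) \<le> (\<Sum>j\<in>{k..<\<theta>}. x j)"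
  using assms split_sum_at[OF assms(3), of x] split_sum_at[OF assms(3), of z]
  unfolding dominates_def by auto

lemma bdd_above_dominating_values:
  fixes \<phi> :: "(nat \<Rightarrow> real) \<Rightarrow> real"
  assumes "continuous_on (simplexD \<theta>) \<phi>"
  shows "bdd_above (\<phi> ` {z \<in> simplexD \<theta>. dominates \<theta> z x})"
proof -
  have "bounded (\<phi> ` simplexD \<theta>)"
    by (rule compact_imp_bounded compact_continuous_image assms compact_simplexD)+
  then show ?thesis
    by (rule bdd_above_mono[OF bounded_imp_bdd_above]) auto
qed

lemma le_gfun:
  assumes "continuous_on (simplexD \<theta>) \<phi>" "z \<in> simplexD \<theta>" "dominates \<theta> z x"
  shows "\<phi> z \<le> gfun \<theta> \<phi> x"
  unfolding gfun_def using assms bdd_above_dominating_values[OF assms(1)]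
  by (intro cSUP_upper) auto

lemma less_gfun_imp:
  assumes "continuous_on (simplexD \<theta>) \<phi>" "x \<in> simplexD \<theta>" "c < gfun \<theta> \<phi> x"
  shows "\<exists>z\<in>simplexD \<theta>. dominates \<theta> z x \<and> c < \<phi> z"
  using assms bdd_above_dominating_values[OF assms(1)] dominates_refl
  unfolding gfun_def by (subst (asm) less_cSUP_iff) auto

lemma bdd_above_dotp_plus_gfun:
  assumes "continuous_on (simplexD \<theta>) \<phi>"
  shows "bdd_above ((\<lambda>x. dotp \<theta> y x + gfun \<theta> \<phi> x) ` simplexD \<theta>)"
proof -
  obtain B where B: "\<And>z. z \<in> simplexD \<theta> \<Longrightarrow> \<phi> z \<le> B"
    using compact_imp_bounded[OF compact_continuous_image[OF assms compact_simplexD]]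
    by (auto simp: bounded_real abs_le_iff)
  have "gfun \<theta> \<phi> x \<le> B" if "x \<in> simplexD \<theta>" for x
    unfolding gfun_def using that dominates_refl B by (intro cSUP_least) auto
  moreover have "dotp \<theta> y x \<le> (\<Sum>i<\<theta>. \<bar>y i\<bar>)" if "x \<in> simplexD \<theta>" for x
    using abs_dotp_le[OF that, of y] by linarith
  ultimately show ?thesis
    by (intro bdd_aboveI[where M = "(\<Sum>i<\<theta>. \<bar>y i\<bar>) + B"]) (force intro: add_mono)
qed

lemma partition_le:
  assumes "l \<in> partitions \<theta> n"
  shows "l i \<le> n"
proof (cases "i < \<theta>")
  case True
  then have "l i \<le> (\<Sum>j<\<theta>. l j)" by (intro member_le_sum) auto
  then show ?thesis using assms unfolding partitions_def by auto
next
  case False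
  then show ?thesis using assms unfolding partitions_def by auto
qed

lemma finite_partitions: "finite (partitions \<theta> n)"
proof (rule finite_subset[OF _ finite_set_of_finite_funs])
  show "partitions \<theta> n \<subseteq> {f. \<forall>x. (x \<in> {..<\<theta>} \<longrightarrow> f x \<in> {..n}) \<and> (x \<notin> {..<\<theta>} \<longrightarrow> f x = 0)}"
  proof
    fix l assume "l \<in> partitions \<theta> n"
    then show "l \<in> {f. \<forall>x. (x \<in> {..<\<theta>} \<longrightarrow> f x \<in> {..n}) \<and> (x \<notin> {..<\<theta>} \<longrightarrow> f x = 0)}"
      using partition_le[of l \<theta> n] unfolding partitions_def by auto
  qed
qed auto

lemma card_partitions_le: "card (partitions \<theta> n) \<le> (n + 1) ^ \<theta>"
proof -
  have "inj_on (\<lambda>f. restrict f {..<\<theta>}) (partitions \<theta> n)"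
  proof (rule inj_onI, rule ext)
    fix f g x assume "f \<in> partitions \<theta> n" "g \<in> partitions \<theta> n"
      and "restrict f {..<\<theta>} = restrict g {..<\<theta>}"
    then show "f x = g x"
      unfolding partitions_def by (cases "x < \<theta>") (auto dest: fun_cong[of _ _ x])
  qed
  moreover have "(\<lambda>f. restrict f {..<\<theta>}) ` partitions \<theta> n \<subseteq> PiE {..<\<theta>} (\<lambda>_. {..n})"
    using partition_le by (intro image_subsetI) (simp add: restrict_PiE_iff)
  ultimately have "card (partitions \<theta> n) \<le> card (PiE {..<\<theta>} (\<lambda>_. {..n::nat}))"
    by (intro card_inj_on_le) (auto intro: finite_PiE)
  then show ?thesis by (simp add: card_PiE)
qed

definition rescaled :: "nat \<Rightarrow> (nat \<Rightarrow> nat) \<Rightarrow> nat \<Rightarrow> real" where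
  "rescaled n l = (\<lambda>i. real (l i) / real n)"

lemma rescaled_in_simplexD:
  assumes "l \<in> partitions \<theta> n" "n \<ge> 1"
  shows "rescaled n l \<in> simplexD \<theta>"
proof -
  have zero: "\<forall>i\<ge>\<theta>. l i = 0" and mono: "\<forall>i j. i \<le> j \<longrightarrow> j < \<theta> \<longrightarrow> l j \<le> l i"
    and total: "(\<Sum>i<\<theta>. l i) = n"
    using assms(1) unfolding partitions_def by auto
  have "(\<Sum>i<\<theta>. real (l i) / real n) = real (\<Sum>i<\<theta>. l i) / real n"
    by (simp add: sum_divide_distrib)
  also have "\<dots> = 1"
    using total assms(2) by simp
  finally have "(\<Sum>i<\<theta>. rescaled n l i) = 1"
    unfolding rescaled_def .
  moreover have "rescaled n l i \<le> 1" for i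
    using partition_le[OF assms(1)] assms(2) unfolding rescaled_def by simp
  moreover have "rescaled n l j \<le> rescaled n l i" if "i \<le> j" "j < \<theta>" for i j
    using mono that unfolding rescaled_def by (intro divide_right_mono) auto
  moreover have "\<forall>i\<ge>\<theta>. rescaled n l i = 0" "\<forall>i. 0 \<le> rescaled n l i"
    using zero unfolding rescaled_def by auto
  ultimately show ?thesis
    unfolding simplexD_def mem_Collect_eq by (intro conjI allI impI) auto
qed

lemma dotp_realv_eq_rescaled:
  assumes "n > 0"
  shows "dotp \<theta> y (realv l) = real n * dotp \<theta> y (rescaled n l)"
  unfolding dotp_def realv_def rescaled_def using assms by (simp add: sum_distrib_left)

lemma dominates_rescaled:
  assumes "dominates \<theta> (realv m) (realv l)"
  shows "dominates \<theta> (rescaled n m) (rescaled n l)"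
  unfolding dominates_def rescaled_def
proof (intro allI impI)
  fix k assume "k \<le> \<theta>"
  then have "(\<Sum>j<k. real (l j)) \<le> (\<Sum>j<k. real (m j))"
    using assms unfolding dominates_def realv_def by auto
  then show "(\<Sum>j<k. real (l j) / real n) \<le> (\<Sum>j<k. real (m j) / real n)"
    by (simp add: sum_divide_distrib[symmetric] divide_right_mono)
qed

lemma real_nat_floor_bounds:
  assumes "0 \<le> (a::real)"
  shows "a - 1 < real (nat \<lfloor>a\<rfloor>)" "real (nat \<lfloor>a\<rfloor>) \<le> a"
  using assms by linarith+

definition round_to_partition :: "nat \<Rightarrow> nat \<Rightarrow> (nat \<Rightarrow> real) \<Rightarrow> nat \<Rightarrow> nat" where
  "round_to_partition \<theta> n w i =
     (if i = 0 then n - (\<Sum>j\<in>{1..<\<theta>}. nat \<lfloor>real n * w j\<rfloor>)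
      else if i < \<theta> then nat \<lfloor>real n * w i\<rfloor> else 0)"

lemma lessThan_eq_insert_0: "(\<theta>::nat) \<ge> 1 \<Longrightarrow> {..<\<theta>} = insert 0 {1..<\<theta>}"
  by auto

lemma round_to_partition_first:
  assumes "\<theta> \<ge> 1" "w \<in> simplexD \<theta>"
  shows "(\<Sum>j\<in>{1..<\<theta>}. nat \<lfloor>real n * w j\<rfloor>) \<le> n"
    and "real n * w 0 \<le> real (round_to_partition \<theta> n w 0)"
    and "real (round_to_partition \<theta> n w 0) \<le> real n * w 0 + real \<theta>"
proof -
  let ?f = "\<lambda>j. real (nat \<lfloor>real n * w j\<rfloor>)"
  have nonneg: "0 \<le> real n * w j" for j
    using simplexD_bounds(1)[OF assms(2)] by simp
  have w0: "w 0 = 1 - (\<Sum>j\<in>{1..<\<theta>}. w j)"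
    using simplexD_sum[OF assms(2)] lessThan_eq_insert_0[OF assms(1)] by simp
  have "(\<Sum>j\<in>{1..<\<theta>}. ?f j) \<le> (\<Sum>j\<in>{1..<\<theta>}. real n * w j)"
    by (intro sum_mono real_nat_floor_bounds(2) nonneg)
  also have "\<dots> = real n - real n * w 0"
    unfolding w0 by (simp add: sum_distrib_left algebra_simps)
  finally have upper: "(\<Sum>j\<in>{1..<\<theta>}. ?f j) \<le> real n - real n * w 0" .
  have "(\<Sum>j\<in>{1..<\<theta>}. real n * w j - 1) \<le> (\<Sum>j\<in>{1..<\<theta>}. ?f j)"
    using real_nat_floor_bounds(1)[OF nonneg] by (intro sum_mono) (simp add: less_imp_le)
  moreover have "(\<Sum>j\<in>{1..<\<theta>}. real n * w j - 1) = real n - real n * w 0 - real (\<theta> - 1)"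
    unfolding w0 by (simp add: sum_subtractf sum_distrib_left algebra_simps)
  ultimately have lower: "real n - real n * w 0 - real \<theta> \<le> (\<Sum>j\<in>{1..<\<theta>}. ?f j)"
    by linarith
  have "0 \<le> real n * w 0" by (rule nonneg)
  then have "real (\<Sum>j\<in>{1..<\<theta>}. nat \<lfloor>real n * w j\<rfloor>) \<le> real n"
    using upper by simp
  then show le_n: "(\<Sum>j\<in>{1..<\<theta>}. nat \<lfloor>real n * w j\<rfloor>) \<le> n"
    by (simp only: of_nat_le_iff)
  then have "real (round_to_partition \<theta> n w 0) = real n - (\<Sum>j\<in>{1..<\<theta>}. ?f j)"
    unfolding round_to_partition_def by (simp add: of_nat_diff)
  with upper lower show "real n * w 0 \<le> real (round_to_partition \<theta> n w 0)"
    and "real (round_to_partition \<theta> n w 0) \<le> real n * w 0 + real \<theta>"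
    by linarith+
qed

lemma round_to_partition_in_partitions:
  assumes "\<theta> \<ge> 1" "w \<in> simplexD \<theta>"
  shows "round_to_partition \<theta> n w \<in> partitions \<theta> n"
proof -
  let ?r = "round_to_partition \<theta> n w"
  have mono: "?r j \<le> ?r i" if "i \<le> j" "j < \<theta>" for i j
  proof -
    have "real n * w j \<le> real n * w i"
      using assms(2) that unfolding simplexD_def by (intro mult_left_mono) auto
    show ?thesis
    proof (cases "i = 0")
      case True
      have "real (?r j) \<le> real (?r i)" if "j \<noteq> 0"
      proof -
        have "real (?r j) \<le> real n * w j"
          using that \<open>j < \<theta>\<close> real_nat_floor_bounds(2)[of "real n * w j"]
            simplexD_bounds(1)[OF assms(2), of j]
          unfolding round_to_partition_def by simp
        then show ?thesis
          using \<open>real n * w j \<le> real n * w i\<close> round_to_partition_first(2)[OF assms, where n = n]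
          unfolding True by linarith
      qed
      then show ?thesis
        using True by (cases "j = 0") auto
    next
      case False
      with that \<open>real n * w j \<le> real n * w i\<close> show ?thesis
        unfolding round_to_partition_def by (simp add: floor_mono nat_mono)
    qed
  qed
  have "(\<Sum>i<\<theta>. ?r i) = ?r 0 + (\<Sum>j\<in>{1..<\<theta>}. nat \<lfloor>real n * w j\<rfloor>)"
    unfolding lessThan_eq_insert_0[OF assms(1)] by (simp add: round_to_partition_def)
  also have "\<dots> = n"
    using round_to_partition_first(1)[OF assms] by (simp add: round_to_partition_def)
  finally show ?thesis
    using mono unfolding partitions_def by (auto simp: round_to_partition_def)
qed

lemma round_to_partition_close:
  assumes "\<theta> \<ge> 1" "w \<in> simplexD \<theta>" "n \<ge> 1"
  shows "\<bar>rescaled n (round_to_partition \<theta> n w) i - w i\<bar> \<le> real \<theta> / real n"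
proof -
  have "\<bar>real (round_to_partition \<theta> n w i) - real n * w i\<bar> \<le> real \<theta>"
  proof (cases "0 < i \<and> i < \<theta>")
    case True
    then have "real (round_to_partition \<theta> n w i) = real (nat \<lfloor>real n * w i\<rfloor>)"
      by (simp add: round_to_partition_def)
    moreover have "1 \<le> real \<theta>"
      using assms(1) by simp
    moreover have "0 \<le> real n * w i"
      using simplexD_bounds(1)[OF assms(2), of i] by simp
    ultimately show ?thesis
      using real_nat_floor_bounds[of "real n * w i"] by (simp only: abs_le_iff) linarith
  next
    case False
    then consider "i = 0" | "\<theta> \<le> i"
      by linarith
    then show ?thesis
    proof cases
      case 1
      then show ?thesis
        using round_to_partition_first(2,3)[OF assms(1,2), where n = n] by (simp add: abs_le_iff)
    next
      case 2
      then show ?thesis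
        using assms(1,2) unfolding round_to_partition_def simplexD_def by simp
    qed
  qed
  moreover have "rescaled n (round_to_partition \<theta> n w) i - w i
      = (real (round_to_partition \<theta> n w i) - real n * w i) / real n"
    using assms(3) unfolding rescaled_def by (simp add: field_simps)
  ultimately show ?thesis
    using assms(3) by (simp add: abs_divide divide_right_mono)
qed

definition vertex0 :: "nat \<Rightarrow> real" where
  "vertex0 = (\<lambda>i. if i = 0 then 1 else 0)"

definition barycenter :: "nat \<Rightarrow> nat \<Rightarrow> real" where
  "barycenter \<theta> = (\<lambda>i. if i < \<theta> then 1 / real \<theta> else 0)"

lemma vertex0_in_simplexD: "\<theta> \<ge> 1 \<Longrightarrow> vertex0 \<in> simplexD \<theta>"
  unfolding simplexD_def vertex0_def by (auto simp: sum.delta')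

lemma barycenter_in_simplexD: "\<theta> \<ge> 1 \<Longrightarrow> barycenter \<theta> \<in> simplexD \<theta>"
  unfolding simplexD_def barycenter_def by auto

definition shift_toward :: "nat \<Rightarrow> nat \<Rightarrow> (nat \<Rightarrow> real) \<Rightarrow> (nat \<Rightarrow> real) \<Rightarrow> nat \<Rightarrow> real" where
  "shift_toward \<theta> n v w = (\<lambda>i. (1 - real \<theta> / real n) * w i + real \<theta> / real n * v i)"

definition lattice_approx :: "nat \<Rightarrow> nat \<Rightarrow> (nat \<Rightarrow> real) \<Rightarrow> (nat \<Rightarrow> real) \<Rightarrow> nat \<Rightarrow> nat" where
  "lattice_approx \<theta> n v w = round_to_partition \<theta> n (shift_toward \<theta> n v w)"

lemma shift_toward_in_simplexD:
  assumes "\<theta> \<ge> 1" "n \<ge> \<theta>" "v \<in> simplexD \<theta>" "w \<in> simplexD \<theta>"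
  shows "shift_toward \<theta> n v w \<in> simplexD \<theta>"
  unfolding shift_toward_def using assms
  by (intro simplexD_convex_comb) (auto simp: divide_le_eq_1)

lemma lattice_approx_in_partitions:
  assumes "\<theta> \<ge> 1" "n \<ge> \<theta>" "v \<in> simplexD \<theta>" "w \<in> simplexD \<theta>"
  shows "lattice_approx \<theta> n v w \<in> partitions \<theta> n"
  unfolding lattice_approx_def
  using round_to_partition_in_partitions[OF assms(1) shift_toward_in_simplexD[OF assms]] .

lemma tendsto_rescaled_lattice_approx:
  assumes "\<theta> \<ge> 1" "v \<in> simplexD \<theta>" "w \<in> simplexD \<theta>"
  shows "(\<lambda>n. rescaled n (lattice_approx \<theta> n v w)) \<longlonglongrightarrow> w"
proof (rule tendsto_fun_componentwise)
  fix i
  have close: "\<bar>rescaled n (lattice_approx \<theta> n v w) i - w i\<bar> \<le> 2 * real \<theta> / real n"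
    if "n \<ge> \<theta>" for n
  proof -
    have "shift_toward \<theta> n v w i - w i = real \<theta> / real n * (v i - w i)"
      unfolding shift_toward_def by (simp add: algebra_simps diff_divide_distrib)
    then have "\<bar>shift_toward \<theta> n v w i - w i\<bar> = real \<theta> / real n * \<bar>v i - w i\<bar>"
      by (simp add: abs_mult)
    also have "\<dots> \<le> real \<theta> / real n"
      using simplexD_bounds[OF assms(2), of i] simplexD_bounds[OF assms(3), of i]
      by (intro mult_left_le) auto
    finally have shift_close: "\<bar>shift_toward \<theta> n v w i - w i\<bar> \<le> real \<theta> / real n" .
    have "n \<ge> 1"
      using that assms(1) by simp
    then have round_close:
      "\<bar>rescaled n (lattice_approx \<theta> n v w) i - shift_toward \<theta> n v w i\<bar> \<le> real \<theta> / real n"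
      unfolding lattice_approx_def
      using round_to_partition_close[OF assms(1) shift_toward_in_simplexD[OF assms(1) that assms(2,3)]]
      by blast
    have "2 * real \<theta> / real n = real \<theta> / real n + real \<theta> / real n"
      by simp
    with shift_close round_close show ?thesis
      by linarith
  qed
  have "(\<lambda>n. rescaled n (lattice_approx \<theta> n v w) i - w i) \<longlonglongrightarrow> 0"
  proof (rule Lim_null_comparison)
    show "\<forall>\<^sub>F n in sequentially.
        norm (rescaled n (lattice_approx \<theta> n v w) i - w i) \<le> 2 * real \<theta> / real n"
      using close by (auto simp: eventually_at_top_linorder)
  qed (rule lim_const_over_n)
  then show "(\<lambda>n. rescaled n (lattice_approx \<theta> n v w) i) \<longlonglongrightarrow> w i"
    by (rule LIM_zero_cancel)
qed

text \<open>After shifting \<open>x\<close> toward the barycenter, \<open>n x\<^sub>j\<close> becomes \<open>(n - \<theta>) x\<^sub>j + 1\<close> for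
  \<open>1 \<le> j < \<theta>\<close>, and the extra \<open>1\<close> pays for rounding down; shifting \<open>z\<close> toward \<open>vertex0\<close>
  turns the tail entries into \<open>(n - \<theta>) z\<^sub>j\<close>, so the tails of \<open>z\<close> stay below those of \<open>x\<close>.\<close>

lemma lattice_approx_dominates:
  assumes "\<theta> \<ge> 1" "n \<ge> \<theta>" "x \<in> simplexD \<theta>" "z \<in> simplexD \<theta>" "dominates \<theta> z x"
  defines "a \<equiv> lattice_approx \<theta> n (barycenter \<theta>) x"
    and "b \<equiv> lattice_approx \<theta> n vertex0 z"
  shows "dominates \<theta> (realv b) (realv a)"
proof (rule dominates_if_tails_le)
  let ?t = "real \<theta> / real n"
  let ?xs = "shift_toward \<theta> n (barycenter \<theta>) x" and ?zs = "shift_toward \<theta> n vertex0 z"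
  have a: "a \<in> partitions \<theta> n" and b: "b \<in> partitions \<theta> n"
    unfolding a_def b_def using assms(1-4) barycenter_in_simplexD vertex0_in_simplexD
    by (auto intro: lattice_approx_in_partitions)
  then show "(\<Sum>j<\<theta>. realv a j) = (\<Sum>j<\<theta>. realv b j)"
    unfolding partitions_def realv_def by (simp flip: of_nat_sum)
  have xs: "?xs \<in> simplexD \<theta>" and zs: "?zs \<in> simplexD \<theta>"
    using assms(1-4) barycenter_in_simplexD vertex0_in_simplexD
    by (auto intro: shift_toward_in_simplexD)
  fix k assume k: "1 \<le> k" "k \<le> \<theta>"
  have tail: "realv (round_to_partition \<theta> n w) j = real (nat \<lfloor>real n * w j\<rfloor>)"
    if "j \<in> {k..<\<theta>}" for w j
    using that k unfolding realv_def round_to_partition_def by simp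
  have "(\<Sum>j\<in>{k..<\<theta>}. realv b j) \<le> (\<Sum>j\<in>{k..<\<theta>}. real n * ?zs j)"
    unfolding b_def lattice_approx_def using tail simplexD_bounds(1)[OF zs]
    by (intro sum_mono) (simp add: real_nat_floor_bounds(2))
  also have "\<dots> = real n * (1 - ?t) * (\<Sum>j\<in>{k..<\<theta>}. z j)"
    unfolding sum_distrib_left using k by (intro sum.cong) (auto simp: shift_toward_def vertex0_def)
  also have "\<dots> \<le> real n * (1 - ?t) * (\<Sum>j\<in>{k..<\<theta>}. x j)"
    using tails_le_if_dominates[OF assms(5) _ k(2)] simplexD_sum[OF assms(3)] simplexD_sum[OF assms(4)]
      assms(1,2)
    by (intro mult_left_mono) (auto simp: divide_le_eq_1)
  also have "\<dots> = (\<Sum>j\<in>{k..<\<theta>}. real n * ?xs j - 1)"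
    unfolding sum_distrib_left using assms(1,2)
    by (intro sum.cong) (auto simp: shift_toward_def barycenter_def algebra_simps)
  also have "\<dots> \<le> (\<Sum>j\<in>{k..<\<theta>}. realv a j)"
    unfolding a_def lattice_approx_def using tail simplexD_bounds(1)[OF xs]
    by (intro sum_mono) (simp add: less_imp_le real_nat_floor_bounds(1))
  finally show "(\<Sum>j\<in>{k..<\<theta>}. realv b j) \<le> (\<Sum>j\<in>{k..<\<theta>}. realv a j)" .
qed

lemma continuous_on_dotp: "continuous_on UNIV (dotp \<theta> y)"
  unfolding dotp_def by (intro continuous_intros continuous_on_product_coordinates)

lemma card_Sigma_partitions_le:
  assumes "\<And>l. B l \<subseteq> partitions \<theta> n"
  shows "card (Sigma (partitions \<theta> n) B) \<le> (n + 1) ^ (2 * \<theta>)"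
proof -
  have "card (Sigma (partitions \<theta> n) B) \<le> card (partitions \<theta> n \<times> partitions \<theta> n)"
    using assms finite_partitions by (intro card_mono) auto
  also have "\<dots> \<le> (n + 1) ^ \<theta> * (n + 1) ^ \<theta>"
    unfolding card_cartesian_product by (intro mult_mono card_partitions_le) auto
  finally show ?thesis
    by (simp add: mult_2 power_add)
qed

lemma sum_exp_realv_eq_sum_Sigma:
  assumes "n > 0" "finite P" "\<And>l. finite (B l)"
  shows "(\<Sum>l\<in>P. exp (dotp \<theta> y (realv l)) * (\<Sum>m\<in>B l. exp (real n * f l m)))
       = (\<Sum>(l, m)\<in>Sigma P B. exp (real n * (dotp \<theta> y (rescaled n l) + f l m)))"
  using assms
  by (simp add: sum.Sigma[symmetric] sum_distrib_left dotp_realv_eq_rescaled distrib_left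
      flip: exp_add)

lemma dotp_plus_le_Sup:
  fixes \<phi> :: "(nat \<Rightarrow> real) \<Rightarrow> real"
  assumes "continuous_on (simplexD \<theta>) \<phi>" "n \<ge> 1"
    and "l \<in> partitions \<theta> n" "m \<in> partitions \<theta> n" "dominates \<theta> (realv m) (realv l)"
    and "\<bar>p - \<phi> (rescaled n m)\<bar> \<le> d"
  shows "dotp \<theta> y (rescaled n l) + p \<le> (SUP x\<in>simplexD \<theta>. dotp \<theta> y x + gfun \<theta> \<phi> x) + d"
proof -
  have x: "rescaled n l \<in> simplexD \<theta>"
    by (rule rescaled_in_simplexD[OF assms(3,2)])
  have "p \<le> \<phi> (rescaled n m) + d"
    using assms(6) by linarith
  also have "\<phi> (rescaled n m) \<le> gfun \<theta> \<phi> (rescaled n l)"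
    using le_gfun[OF assms(1) rescaled_in_simplexD[OF assms(4,2)] dominates_rescaled[OF assms(5)]] .
  finally have "dotp \<theta> y (rescaled n l) + p \<le> dotp \<theta> y (rescaled n l) + gfun \<theta> \<phi> (rescaled n l) + d"
    by linarith
  also have "\<dots> \<le> (SUP x\<in>simplexD \<theta>. dotp \<theta> y x + gfun \<theta> \<phi> x) + d"
    using cSUP_upper[OF x bdd_above_dotp_plus_gfun[OF assms(1)]] by simp
  finally show ?thesis .
qed

lemma eventually_less_dotp_plus:
  fixes \<phi> :: "(nat \<Rightarrow> real) \<Rightarrow> real"
    and Phi :: "nat \<Rightarrow> (nat \<Rightarrow> nat) \<Rightarrow> (nat \<Rightarrow> nat) \<Rightarrow> real"
  assumes "\<theta> \<ge> 1" and cont: "continuous_on (simplexD \<theta>) \<phi>" and "\<delta> \<longlonglongrightarrow> 0"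
    and \<delta>: "\<And>n l m. n \<ge> 1 \<Longrightarrow> l \<in> partitions \<theta> n \<Longrightarrow> m \<in> partitions \<theta> n \<Longrightarrow>
              \<bar>Phi n l m - \<phi> (rescaled n m)\<bar> \<le> \<delta> n"
    and "c < (SUP x\<in>simplexD \<theta>. dotp \<theta> y x + gfun \<theta> \<phi> x)"
  shows "\<forall>\<^sub>F n in sequentially. \<exists>l\<in>partitions \<theta> n. \<exists>m\<in>partitions \<theta> n.
           dominates \<theta> (realv m) (realv l) \<and> c < dotp \<theta> y (rescaled n l) + Phi n l m"
proof -
  obtain x where x: "x \<in> simplexD \<theta>" and "c - dotp \<theta> y x < gfun \<theta> \<phi> x"
    using assms(5) vertex0_in_simplexD[OF assms(1)]
    by (subst (asm) less_cSUP_iff[OF _ bdd_above_dotp_plus_gfun[OF cont]]) force+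
  then obtain z where z: "z \<in> simplexD \<theta>" and dom: "dominates \<theta> z x"
    and "c < dotp \<theta> y x + \<phi> z"
    using less_gfun_imp[OF cont] by force
  define a where "a n = lattice_approx \<theta> n (barycenter \<theta>) x" for n
  define b where "b n = lattice_approx \<theta> n vertex0 z" for n
  have in_partitions: "a n \<in> partitions \<theta> n" "b n \<in> partitions \<theta> n" if "n \<ge> \<theta>" for n
    unfolding a_def b_def using assms(1) that x z barycenter_in_simplexD vertex0_in_simplexD
    by (auto intro: lattice_approx_in_partitions)
  have "(\<lambda>n. rescaled n (a n)) \<longlonglongrightarrow> x" "(\<lambda>n. rescaled n (b n)) \<longlonglongrightarrow> z"
    unfolding a_def b_def using assms(1) x z barycenter_in_simplexD vertex0_in_simplexD
    by (auto intro: tendsto_rescaled_lattice_approx)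
  moreover have "\<forall>\<^sub>F n in sequentially. rescaled n (b n) \<in> simplexD \<theta>"
    using eventually_ge_at_top[of \<theta>]
    by eventually_elim (use assms(1) in_partitions in \<open>auto intro: rescaled_in_simplexD\<close>)
  ultimately have "(\<lambda>n. dotp \<theta> y (rescaled n (a n)) + \<phi> (rescaled n (b n)) - \<delta> n)
      \<longlonglongrightarrow> dotp \<theta> y x + \<phi> z - 0"
    by (intro tendsto_diff tendsto_add assms(3) continuous_on_tendsto_compose[OF cont _ z]
        continuous_on_tendsto_compose[OF continuous_on_dotp]) auto
  then have "\<forall>\<^sub>F n in sequentially. c < dotp \<theta> y (rescaled n (a n)) + \<phi> (rescaled n (b n)) - \<delta> n"
    using \<open>c < dotp \<theta> y x + \<phi> z\<close> by (intro order_tendstoD(1)) auto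
  then show ?thesis
    using eventually_ge_at_top[of \<theta>]
  proof eventually_elim
    case (elim n)
    have "\<phi> (rescaled n (b n)) - \<delta> n \<le> Phi n (a n) (b n)"
      using \<delta>[of n "a n" "b n"] in_partitions[OF elim(2)] elim(2) assms(1) by simp
    moreover have "dominates \<theta> (realv (b n)) (realv (a n))"
      unfolding a_def b_def by (rule lattice_approx_dominates[OF assms(1) elim(2) x z dom])
    ultimately show ?case
      using elim(1) in_partitions[OF elim(2)] by force
  qed
qed

theorem lemma3p4:
  fixes \<theta> :: nat
    and \<phi> :: "(nat \<Rightarrow> real) \<Rightarrow> real"
    and Phi :: "nat \<Rightarrow> (nat \<Rightarrow> nat) \<Rightarrow> (nat \<Rightarrow> nat) \<Rightarrow> real"
    and y :: "nat \<Rightarrow> real"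
  assumes "\<theta> \<ge> 2"
    and "continuous_on (simplexD \<theta>) \<phi>"
    and "\<exists>\<delta>::nat \<Rightarrow> real. \<delta> \<longlonglongrightarrow> 0 \<and>
           (\<forall>n l m. n \<ge> 1 \<longrightarrow> l \<in> partitions \<theta> n \<longrightarrow> m \<in> partitions \<theta> n \<longrightarrow>
              \<bar>Phi n l m - \<phi> (\<lambda>i. real (m i) / real n)\<bar> \<le> \<delta> n)"
  shows "(\<lambda>n. ln (\<Sum>l\<in>partitions \<theta> n. exp (dotp \<theta> y (realv l)) *
               (\<Sum>m\<in>{m\<in>partitions \<theta> n. dominates \<theta> (realv m) (realv l)}.
                   exp (real n * Phi n l m))) / real n)
         \<longlonglongrightarrow> (SUP x\<in>simplexD \<theta>. dotp \<theta> y x + gfun \<theta> \<phi> x)"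
proof -
  obtain \<delta> :: "nat \<Rightarrow> real" where "\<delta> \<longlonglongrightarrow> 0" and \<delta>:
    "\<And>n l m. n \<ge> 1 \<Longrightarrow> l \<in> partitions \<theta> n \<Longrightarrow> m \<in> partitions \<theta> n \<Longrightarrow>
       \<bar>Phi n l m - \<phi> (rescaled n m)\<bar> \<le> \<delta> n"
    using assms(3) unfolding rescaled_def by blast
  define Q where "Q n l = {m \<in> partitions \<theta> n. dominates \<theta> (realv m) (realv l)}" for n l
  define a where "a n = (\<lambda>(l, m). dotp \<theta> y (rescaled n l) + Phi n l m)" for n
  have "(\<lambda>n. ln (\<Sum>i\<in>Sigma (partitions \<theta> n) (Q n). exp (real n * a n i)) / real n)
        \<longlonglongrightarrow> (SUP x\<in>simplexD \<theta>. dotp \<theta> y x + gfun \<theta> \<phi> x)"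
  proof (rule tendsto_ln_sum_exp_over_n)
    show "card (Sigma (partitions \<theta> n) (Q n)) \<le> (n + 1) ^ (2 * \<theta>)" for n
      by (rule card_Sigma_partitions_le) (auto simp: Q_def)
    show "a n i \<le> (SUP x\<in>simplexD \<theta>. dotp \<theta> y x + gfun \<theta> \<phi> x) + \<delta> n"
      if n: "n \<ge> 1" and "i \<in> Sigma (partitions \<theta> n) (Q n)" for n i
      using that dotp_plus_le_Sup[OF assms(2) n _ _ _ \<delta>[OF n]] by (auto simp: Q_def a_def)
    show "\<forall>\<^sub>F n in sequentially. \<exists>i\<in>Sigma (partitions \<theta> n) (Q n). c < a n i"
      if "c < (SUP x\<in>simplexD \<theta>. dotp \<theta> y x + gfun \<theta> \<phi> x)" for c
      using eventually_less_dotp_plus[where Phi = Phi, OF _ assms(2) \<open>\<delta> \<longlonglongrightarrow> 0\<close> \<delta> that] assms(1)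
      by (auto simp: Q_def a_def elim!: eventually_mono)
  qed (auto simp: Q_def finite_partitions \<open>\<delta> \<longlonglongrightarrow> 0\<close>)
  then show ?thesis
    by (rule Lim_transform_eventually[OF _ eventually_mono[OF eventually_ge_at_top[of "1::nat"]]])
      (simp add: sum_exp_realv_eq_sum_Sigma finite_partitions Q_def[abs_def] a_def prod.case_distrib)
qed

end
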